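(* Assume $G$ is connected. Let $S_n\subset V$ be nonempty with $S_n\ne V$, let $\delta t>0$ and $m>0$, and let $\mathcal V_m=\{u\in\mathcal V:-m\le u_i\le m\ \forall i\}$. Let $$F(u)=\mathrm{TV}^q_a(u)+\frac1{\delta t}\langle u,sd^{\Sigma_n}\rangle_{\mathcal V}.$$ Then $F$ has a minimizer over $\mathcal V_m$. Moreover, for every minimizer $u$ of $F$ over $\mathcal V_m$ and every $s\in(-m,m)$, the superlevel set $E(s)=\{i\in V:u_i>s\}$ minimizes $\hat S\mapsto\mathcal F(\hat S,S_n)$ over all subsets $\hat S\subset V$, where $$\mathcal F(\hat S,S_n)=\mathrm{TV}^q_a(\chi_{\hat S})-\mathrm{TV}^q_a(\chi_{S_n})+\frac1{\delta t}\big\langle\chi_{\hat S}-\chi_{S_n},(\chi_{\hat S}-\chi_{S_n})\,d^{\Sigma_n}\big\rangle_{\mathcal V}.$$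
   Context: $G=(V,E)$ is a finite undirected weighted graph with vertex set $V=\{1,\dots,n\}$. The weights satisfy $\omega_{ij}=\omega_{ji}\ge0$, with $\omega_{ij}>0$ iff $\{i,j\}\in E$, and $\omega_{ii}=0$. The degrees are $d_i=\sum_j\omega_{ij}>0$. Parameters $r\in[0,1]$ and $q\in[1/2,1]$ are fixed, and $\omega_{ij}^q:=0$ when $\omega_{ij}=0$. $\mathcal V$ is the space of functions $V\to\mathbb R$ with $\langle u,v\rangle_{\mathcal V}=\sum_iu_iv_id_i^r$, and $\chi_S$ is the indicator of $S$. The anisotropic total variation is $\mathrm{TV}^q_a(u)=\frac12\sum_{i,j}\omega_{ij}^q|u_i-u_j|$. Graph distance: each edge $\{i,j\}$ with $\omega_{ij}>0$ has length $\omega_{ij}^{q-1}$. The distance $d^G_{ij}$ is the minimal total length of a path from $i$ to $j$, with $d^G_{ii}=0$. For nonempty $T\subset V$, $d^T_i=\min_{j\in T}d^G_{ij}$. $\Sigma_n$ is the set of nodes incident to some edge $\{i,j\}$ with $\omega_{ij}>0$, $i\in S_n$, $j\notin S_n$. The signed distance is $sd^{\Sigma_n}=(\chi_{V\setminus S_n}-\chi_{S_n})\,d^{\Sigma_n}$ (pointwise product). *)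

theory Defs
  imports Complex_Main
begin

(* Vertex set V = {1..n}; weights w :: nat => nat => real; functions on V are nat => real
   (values outside V are irrelevant). *)

definition deg :: "nat \<Rightarrow> (nat \<Rightarrow> nat \<Rightarrow> real) \<Rightarrow> nat \<Rightarrow> real" where
  "deg n w i = (\<Sum>j\<in>{1..n}. w i j)"

definition ip :: "nat \<Rightarrow> (nat \<Rightarrow> nat \<Rightarrow> real) \<Rightarrow> real \<Rightarrow> (nat \<Rightarrow> real) \<Rightarrow> (nat \<Rightarrow> real) \<Rightarrow> real" where
  "ip n w r u v = (\<Sum>i\<in>{1..n}. u i * v i * deg n w i powr r)"

definition chi :: "nat set \<Rightarrow> nat \<Rightarrow> real" where
  "chi S i = (if i \<in> S then 1 else 0)"

(* note: 0 powr q = 0 in Isabelle, matching the convention w^q := 0 when w = 0 *)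
definition TVa :: "nat \<Rightarrow> (nat \<Rightarrow> nat \<Rightarrow> real) \<Rightarrow> real \<Rightarrow> (nat \<Rightarrow> real) \<Rightarrow> real" where
  "TVa n w q u = (1/2) * (\<Sum>i\<in>{1..n}. \<Sum>j\<in>{1..n}. w i j powr q * \<bar>u i - u j\<bar>)"

definition is_path :: "nat \<Rightarrow> (nat \<Rightarrow> nat \<Rightarrow> real) \<Rightarrow> nat list \<Rightarrow> nat \<Rightarrow> nat \<Rightarrow> bool" where
  "is_path n w p i j \<longleftrightarrow> p \<noteq> [] \<and> hd p = i \<and> last p = j \<and> set p \<subseteq> {1..n} \<and>
     (\<forall>k. Suc k < length p \<longrightarrow> w (p ! k) (p ! Suc k) > 0)"

definition path_len :: "(nat \<Rightarrow> nat \<Rightarrow> real) \<Rightarrow> real \<Rightarrow> nat list \<Rightarrow> real" where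
  "path_len w q p = (\<Sum>k<length p - 1. w (p ! k) (p ! Suc k) powr (q - 1))"

definition connected_graph :: "nat \<Rightarrow> (nat \<Rightarrow> nat \<Rightarrow> real) \<Rightarrow> bool" where
  "connected_graph n w \<longleftrightarrow> (\<forall>i\<in>{1..n}. \<forall>j\<in>{1..n}. \<exists>p. is_path n w p i j)"

(* graph distance: minimal total length of a path (the infimum is attained) *)
definition dG :: "nat \<Rightarrow> (nat \<Rightarrow> nat \<Rightarrow> real) \<Rightarrow> real \<Rightarrow> nat \<Rightarrow> nat \<Rightarrow> real" where
  "dG n w q i j = (if i = j then 0 else Inf {path_len w q p | p. is_path n w p i j})"

definition dSet :: "nat \<Rightarrow> (nat \<Rightarrow> nat \<Rightarrow> real) \<Rightarrow> real \<Rightarrow> nat set \<Rightarrow> nat \<Rightarrow> real" where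
  "dSet n w q T i = Min ((\<lambda>j. dG n w q i j) ` T)"

definition Sigma_bd :: "nat \<Rightarrow> (nat \<Rightarrow> nat \<Rightarrow> real) \<Rightarrow> nat set \<Rightarrow> nat set" where
  "Sigma_bd n w S = {k. \<exists>i j. i \<in> S \<and> j \<in> {1..n} - S \<and> w i j > 0 \<and> (k = i \<or> k = j)}"

definition sd :: "nat \<Rightarrow> (nat \<Rightarrow> nat \<Rightarrow> real) \<Rightarrow> real \<Rightarrow> nat set \<Rightarrow> nat \<Rightarrow> real" where
  "sd n w q S i = (chi ({1..n} - S) i - chi S i) * dSet n w q (Sigma_bd n w S) i"

definition Fu :: "nat \<Rightarrow> (nat \<Rightarrow> nat \<Rightarrow> real) \<Rightarrow> real \<Rightarrow> real \<Rightarrow> real \<Rightarrow> nat set \<Rightarrow> (nat \<Rightarrow> real) \<Rightarrow> real" where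
  "Fu n w r q dt S u = TVa n w q u + (1 / dt) * ip n w r u (sd n w q S)"

definition FS :: "nat \<Rightarrow> (nat \<Rightarrow> nat \<Rightarrow> real) \<Rightarrow> real \<Rightarrow> real \<Rightarrow> real \<Rightarrow> nat set \<Rightarrow> nat set \<Rightarrow> real" where
  "FS n w r q dt S' S = TVa n w q (chi S') - TVa n w q (chi S)
     + (1 / dt) * ip n w r (\<lambda>i. chi S' i - chi S i)
          (\<lambda>i. (chi S' i - chi S i) * dSet n w q (Sigma_bd n w S) i)"

definition box :: "nat \<Rightarrow> real \<Rightarrow> (nat \<Rightarrow> real) set" where
  "box n m = {u. \<forall>i\<in>{1..n}. - m \<le> u i \<and> u i \<le> m}"

end

theory Submission
  imports Defs
begin

(* Proof idea (discrete coarea / layer-cake argument).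
   Write the linear part of F as a weighted sum  \<Sum> c_i u_i  with c_i = sd_i d_i^r / dt.
   For a base level a consider the shifted energy  H_a(u) = TV(u) + \<Sum> c_i (u_i - a)
   and the set energy  G(E) = TV(chi E) + \<Sum>_{i\<in>E} c_i.  Two facts drive everything:
   (1) H splits additively under truncation at any level b:
       H_a(u) = H_b(max u b) + H_a(min u b);
   (2) on a step function  a + t chi E  (t \<ge> 0) it equals  t G(E).
   Peeling off the finitely many level sets of u gives  H_a(u) \<ge> (b - a) min G  for u with
   values in [a,b], with equality for  a + (b - a) chi E0,  E0 a minimizer of G.  Conversely, if
   u attains this bound, splitting u at a level s and at the next value above s shows that the
   superlevel set {u > s} is itself a minimizer of G.  Finally F = H_{-m} + const and
   FS(-, S) = G + const, which turns this abstract result into the theorem.  The argument is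
   purely order-theoretic: it works for arbitrary coefficients c and weights, so of the graph
   hypotheses only m > 0 is needed. *)

definition lin_form :: "nat \<Rightarrow> (nat \<Rightarrow> real) \<Rightarrow> (nat \<Rightarrow> real) \<Rightarrow> real" where
  "lin_form n c u = (\<Sum>i\<in>{1..n}. c i * u i)"

definition shifted_energy ::
  "nat \<Rightarrow> (nat \<Rightarrow> nat \<Rightarrow> real) \<Rightarrow> real \<Rightarrow> (nat \<Rightarrow> real) \<Rightarrow> real \<Rightarrow> (nat \<Rightarrow> real) \<Rightarrow> real" where
  "shifted_energy n w q c a u = TVa n w q u + lin_form n c (\<lambda>i. u i - a)"

definition set_energy :: "nat \<Rightarrow> (nat \<Rightarrow> nat \<Rightarrow> real) \<Rightarrow> real \<Rightarrow> (nat \<Rightarrow> real) \<Rightarrow> nat set \<Rightarrow> real" where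
  "set_energy n w q c E = TVa n w q (chi E) + lin_form n c (chi E)"

definition interval_box :: "nat \<Rightarrow> real \<Rightarrow> real \<Rightarrow> (nat \<Rightarrow> real) set" where
  "interval_box n a b = {u. \<forall>i\<in>{1..n}. a \<le> u i \<and> u i \<le> b}"

lemma abs_diff_truncation_split:
  "\<bar>x - y\<bar> = \<bar>max x c - max y c\<bar> + \<bar>min x c - min (y::real) c\<bar>"
  by (auto simp: max_def min_def abs_if)

lemma TVa_truncation_split:
  "TVa n w q u = TVa n w q (\<lambda>i. max (u i) b) + TVa n w q (\<lambda>i. min (u i) b)"
proof -
  have "(\<Sum>i\<in>{1..n}. \<Sum>j\<in>{1..n}. w i j powr q * \<bar>u i - u j\<bar>)
      = (\<Sum>i\<in>{1..n}. \<Sum>j\<in>{1..n}. w i j powr q * \<bar>max (u i) b - max (u j) b\<bar>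
            + w i j powr q * \<bar>min (u i) b - min (u j) b\<bar>)"
    by (intro sum.cong refl, subst abs_diff_truncation_split[of _ _ b]) (simp add: algebra_simps)
  then show ?thesis
    unfolding TVa_def by (simp add: sum.distrib algebra_simps)
qed

lemma shifted_energy_truncation_split:
  "shifted_energy n w q c a u
     = shifted_energy n w q c b (\<lambda>i. max (u i) b) + shifted_energy n w q c a (\<lambda>i. min (u i) b)"
proof -
  have "lin_form n c (\<lambda>i. u i - a)
      = lin_form n c (\<lambda>i. max (u i) b - b) + lin_form n c (\<lambda>i. min (u i) b - a)"
    unfolding lin_form_def sum.distrib[symmetric]
    by (rule sum.cong) (auto simp: max_def min_def algebra_simps)
  then show ?thesis
    unfolding shifted_energy_def using TVa_truncation_split[of n w q u b] by simp
qed

lemma shifted_energy_step: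
  assumes "\<forall>i\<in>{1..n}. v i = a + t * chi E i" and "t \<ge> 0"
  shows "shifted_energy n w q c a v = t * set_energy n w q c E"
proof -
  have "(\<Sum>i\<in>{1..n}. \<Sum>j\<in>{1..n}. w i j powr q * \<bar>v i - v j\<bar>)
      = (\<Sum>i\<in>{1..n}. \<Sum>j\<in>{1..n}. t * (w i j powr q * \<bar>chi E i - chi E j\<bar>))"
  proof (intro sum.cong refl)
    fix i j assume "i \<in> {1..n}" "j \<in> {1..n}"
    then have "v i - v j = t * (chi E i - chi E j)" using assms(1) by (simp add: algebra_simps)
    then show "w i j powr q * \<bar>v i - v j\<bar> = t * (w i j powr q * \<bar>chi E i - chi E j\<bar>)"
      using assms(2) by (simp add: abs_mult)
  qed
  then have "TVa n w q v = t * TVa n w q (chi E)"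
    unfolding TVa_def by (simp add: sum_distrib_left)
  moreover have "lin_form n c (\<lambda>i. v i - a) = t * lin_form n c (chi E)"
    unfolding lin_form_def using assms(1) by (simp add: sum_distrib_left algebra_simps)
  ultimately show ?thesis
    unfolding shifted_energy_def set_energy_def by (simp add: algebra_simps)
qed

lemma top_layer_is_step:
  assumes "\<forall>i\<in>{1..n}. u i \<le> M' \<or> u i = M" and "M' < M"
  shows "\<forall>i\<in>{1..n}. max (u i) M' = M' + (M - M') * chi {i\<in>{1..n}. u i > M'} i"
  using assms by (auto simp: chi_def max_def)

lemma shifted_energy_lower_bound:
  assumes g_le: "\<forall>E. E \<subseteq> {1..n} \<longrightarrow> g \<le> set_energy n w q c E" and g_nonpos: "g \<le> 0"
    and "u \<in> interval_box n a b" and "a \<le> b"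
  shows "(b - a) * g \<le> shifted_energy n w q c a u"
  using assms(3,4)
proof (induction "card (u ` {1..n} \<union> {a})" arbitrary: u b rule: less_induct)
  case less
  define A where "A = u ` {1..n} \<union> {a}"
  have finA: "finite A" "A \<noteq> {}" unfolding A_def by auto
  define M where "M = Max A"
  have M_in: "M \<in> A" and le_M: "\<And>x. x \<in> A \<Longrightarrow> x \<le> M"
    unfolding M_def using finA by auto
  have u_bounds: "\<And>i. i \<in> {1..n} \<Longrightarrow> a \<le> u i \<and> u i \<le> b"
    using less.prems(1) by (auto simp: interval_box_def)
  show ?case
  proof (cases "M = a")
    case True
    then have "\<forall>i\<in>{1..n}. u i = a + 0 * chi {} i"
      using le_M u_bounds unfolding A_def by (force simp: chi_def)
    then have "shifted_energy n w q c a u = 0"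
      using shifted_energy_step[of n u a 0 "{}"] by simp
    then show ?thesis using less.prems(2) g_nonpos by (simp add: mult_nonneg_nonpos)
  next
    case False
    define M' where "M' = Max (A - {M})"
    have a_in: "a \<in> A - {M}" using False unfolding A_def by auto
    have fin_rest: "finite (A - {M})" "A - {M} \<noteq> {}" using finA(1) a_in by auto
    have M'_in: "M' \<in> A - {M}" and le_M': "\<And>x. x \<in> A - {M} \<Longrightarrow> x \<le> M'"
      unfolding M'_def using fin_rest by (auto simp del: Diff_iff)
    have aM': "a \<le> M'" using le_M' a_in by blast
    have M'M: "M' < M" using M'_in le_M[of M'] by force
    define E where "E = {i\<in>{1..n}. u i > M'}"
    have "\<forall>i\<in>{1..n}. u i \<le> M' \<or> u i = M"
      using le_M' unfolding A_def by fastforce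
    then have top: "shifted_energy n w q c M' (\<lambda>i. max (u i) M') = (M - M') * set_energy n w q c E"
      using M'M unfolding E_def by (intro shifted_energy_step top_layer_is_step) auto
    have "E \<subseteq> {1..n}" unfolding E_def by auto
    then have g_le_E: "g \<le> set_energy n w q c E" using g_le by blast
    have "(\<lambda>i. min (u i) M') ` {1..n} \<union> {a} \<subseteq> A"
      using M'_in unfolding A_def by (auto simp: min_def)
    moreover have "M \<notin> (\<lambda>i. min (u i) M') ` {1..n} \<union> {a}"
      using M'M False by (auto simp: min_def)
    ultimately have "(\<lambda>i. min (u i) M') ` {1..n} \<union> {a} \<subset> A"
      using M_in by blast
    then have "card ((\<lambda>i. min (u i) M') ` {1..n} \<union> {a}) < card (u ` {1..n} \<union> {a})"
      using psubset_card_mono[OF finA(1)] A_def by simp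
    moreover have "(\<lambda>i. min (u i) M') \<in> interval_box n a M'"
      using u_bounds aM' by (auto simp: interval_box_def)
    ultimately have rest: "(M' - a) * g \<le> shifted_energy n w q c a (\<lambda>i. min (u i) M')"
      using less.hyps aM' by blast
    have "M \<le> b" using M_in u_bounds less.prems(2) unfolding A_def by auto
    then have "(b - a) * g \<le> (M - M') * g + (M' - a) * g"
      using g_nonpos by (simp add: mult_right_mono_neg algebra_simps)
    also have "\<dots> \<le> (M - M') * set_energy n w q c E + shifted_energy n w q c a (\<lambda>i. min (u i) M')"
      using rest g_le_E M'M by (intro add_mono mult_left_mono) auto
    also have "\<dots> = shifted_energy n w q c a u"
      using shifted_energy_truncation_split[of n w q c a u M'] top by simp
    finally show ?thesis .
  qed
qed

(* Equality in the lower bound forces every strict superlevel set to minimize the set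
   energy: split u at s and at the smallest value s' > s; the middle piece is the step
   (s' - s) chi {u > s} and the outer pieces obey the lower bound. *)
lemma superlevel_set_minimizes:
  assumes g_le: "\<forall>E. E \<subseteq> {1..n} \<longrightarrow> g \<le> set_energy n w q c E" and g_nonpos: "g \<le> 0"
    and u: "u \<in> interval_box n a b" and u_opt: "shifted_energy n w q c a u \<le> (b - a) * g"
    and s: "a < s" "s < b"
  shows "set_energy n w q c {i\<in>{1..n}. u i > s} \<le> g"
proof -
  define E where "E = {i\<in>{1..n}. u i > s}"
  define s' where "s' = Min (insert b (u ` E))"
  have fin: "finite (insert b (u ` E))" unfolding E_def by auto
  have s'_le_b: "s' \<le> b" and s_less_s': "s < s'" and s'_le_u: "\<And>i. i \<in> E \<Longrightarrow> s' \<le> u i"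
    unfolding s'_def using fin s by (auto simp: E_def Min_gr_iff)
  define u1 where "u1 i = max (u i) s" for i
  have "\<forall>i\<in>{1..n}. min (u1 i) s' = s + (s' - s) * chi E i"
    using s'_le_u s_less_s' by (auto simp: u1_def chi_def E_def)
  then have middle: "shifted_energy n w q c s (\<lambda>i. min (u1 i) s') = (s' - s) * set_energy n w q c E"
    using s_less_s' by (intro shifted_energy_step) auto
  have upper: "(b - s') * g \<le> shifted_energy n w q c s' (\<lambda>i. max (u1 i) s')"
    using u s'_le_b s_less_s'
    by (intro shifted_energy_lower_bound[OF g_le g_nonpos]) (auto simp: interval_box_def u1_def)
  have lower: "(s - a) * g \<le> shifted_energy n w q c a (\<lambda>i. min (u i) s)"
    using u s by (intro shifted_energy_lower_bound[OF g_le g_nonpos]) (auto simp: interval_box_def)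
  have "shifted_energy n w q c a u
      = shifted_energy n w q c s' (\<lambda>i. max (u1 i) s') + shifted_energy n w q c s (\<lambda>i. min (u1 i) s')
        + shifted_energy n w q c a (\<lambda>i. min (u i) s)"
    using shifted_energy_truncation_split[of n w q c a u s]
      shifted_energy_truncation_split[of n w q c s u1 s'] unfolding u1_def by simp
  then have "(s' - s) * set_energy n w q c E \<le> (s' - s) * g"
    using u_opt upper middle lower by (simp add: algebra_simps)
  then show ?thesis using s_less_s' unfolding E_def by simp
qed

lemma shifted_energy_coarea_minimization:
  assumes "a < b"
  shows "(\<exists>u\<in>interval_box n a b. \<forall>v\<in>interval_box n a b.
            shifted_energy n w q c a u \<le> shifted_energy n w q c a v)
       \<and> (\<forall>u\<in>interval_box n a b. (\<forall>v\<in>interval_box n a b.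
            shifted_energy n w q c a u \<le> shifted_energy n w q c a v) \<longrightarrow>
          (\<forall>s E. a < s \<and> s < b \<and> E \<subseteq> {1..n} \<longrightarrow>
            set_energy n w q c {i\<in>{1..n}. u i > s} \<le> set_energy n w q c E))"
proof -
  define g where "g = Min (set_energy n w q c ` Pow {1..n})"
  have g_le: "\<forall>E. E \<subseteq> {1..n} \<longrightarrow> g \<le> set_energy n w q c E" unfolding g_def by auto
  have "g \<in> set_energy n w q c ` Pow {1..n}" unfolding g_def by (intro Min_in) auto
  then obtain E0 where E0: "E0 \<subseteq> {1..n}" "g = set_energy n w q c E0" by auto
  have "set_energy n w q c {} = 0" unfolding set_energy_def TVa_def lin_form_def chi_def by simp
  then have g_nonpos: "g \<le> 0" using g_le by (metis empty_subsetI)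
  define u0 where "u0 i = a + (b - a) * chi E0 i" for i
  have u0_box: "u0 \<in> interval_box n a b"
    using assms unfolding interval_box_def u0_def chi_def by auto
  have u0_val: "shifted_energy n w q c a u0 = (b - a) * g"
    using shifted_energy_step[of n u0 a "b - a" E0] assms E0 unfolding u0_def by auto
  have bound: "\<And>v. v \<in> interval_box n a b \<Longrightarrow> (b - a) * g \<le> shifted_energy n w q c a v"
    using shifted_energy_lower_bound[OF g_le g_nonpos] assms by (simp add: less_imp_le)
  show ?thesis
  proof (intro conjI ballI impI allI)
    show "\<exists>u\<in>interval_box n a b. \<forall>v\<in>interval_box n a b.
            shifted_energy n w q c a u \<le> shifted_energy n w q c a v"
      using u0_box u0_val bound by (intro bexI[of _ u0]) auto
  next
    fix u s E
    assume u: "u \<in> interval_box n a b"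
      and opt: "\<forall>v\<in>interval_box n a b. shifted_energy n w q c a u \<le> shifted_energy n w q c a v"
      and sE: "a < s \<and> s < b \<and> E \<subseteq> {1..n}"
    have "shifted_energy n w q c a u \<le> (b - a) * g"
      using opt u0_box u0_val by metis
    then have "set_energy n w q c {i\<in>{1..n}. u i > s} \<le> g"
      using superlevel_set_minimizes[OF g_le g_nonpos u] sE by blast
    also have "g \<le> set_energy n w q c E" using g_le sE by blast
    finally show "set_energy n w q c {i\<in>{1..n}. u i > s} \<le> set_energy n w q c E" .
  qed
qed

definition sd_coeff ::
  "nat \<Rightarrow> (nat \<Rightarrow> nat \<Rightarrow> real) \<Rightarrow> real \<Rightarrow> real \<Rightarrow> real \<Rightarrow> nat set \<Rightarrow> nat \<Rightarrow> real" where
  "sd_coeff n w r q dt S i = (1/dt) * (sd n w q S i * deg n w i powr r)"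

lemma Fu_eq_shifted_energy:
  "Fu n w r q dt S u
     = shifted_energy n w q (sd_coeff n w r q dt S) (-m) u - m * lin_form n (sd_coeff n w r q dt S) (\<lambda>_. 1)"
proof -
  define c where "c = sd_coeff n w r q dt S"
  have shift: "(\<Sum>i\<in>{1..n}. c i * (u i - - m)) = (\<Sum>i\<in>{1..n}. c i * u i) + m * (\<Sum>i\<in>{1..n}. c i)"
    by (simp add: algebra_simps sum.distrib sum_distrib_left)
  have "(1/dt) * (\<Sum>i\<in>{1..n}. u i * sd n w q S i * deg n w i powr r) = (\<Sum>i\<in>{1..n}. c i * u i)"
    by (simp add: c_def sd_coeff_def sum_distrib_left algebra_simps)
  then show ?thesis
    unfolding Fu_def shifted_energy_def lin_form_def ip_def c_def[symmetric] using shift by simp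
qed

(* FS(-, S) differs from the set energy by a constant, since on S the signed distance is -d
   and off S it is +d. *)
lemma FS_eq_set_energy:
  "FS n w r q dt S' S = set_energy n w q (sd_coeff n w r q dt S) S'
     + ((1/dt) * (\<Sum>i\<in>{1..n}. chi S i * dSet n w q (Sigma_bd n w S) i * deg n w i powr r)
        - TVa n w q (chi S))"
proof -
  define D where "D = dSet n w q (Sigma_bd n w S)"
  define c where "c = sd_coeff n w r q dt S"
  define p where "p i = deg n w i powr r" for i
  have pointwise: "(1/dt) * ((chi S' i - chi S i) * ((chi S' i - chi S i) * D i) * p i)
      = c i * chi S' i + (1/dt) * (chi S i * D i * p i)" if "i \<in> {1..n}" for i
  proof -
    have "(chi S' i - chi S i) * ((chi S' i - chi S i) * D i)
        = chi S' i * ((chi ({1..n} - S) i - chi S i) * D i) + chi S i * D i"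
      using that by (auto simp: chi_def)
    then show ?thesis unfolding c_def sd_coeff_def sd_def D_def p_def by (simp add: algebra_simps)
  qed
  have "(1/dt) * ip n w r (\<lambda>i. chi S' i - chi S i) (\<lambda>i. (chi S' i - chi S i) * D i)
      = (\<Sum>i\<in>{1..n}. c i * chi S' i + (1/dt) * (chi S i * D i * p i))"
    unfolding ip_def sum_distrib_left p_def[symmetric] by (rule sum.cong) (use pointwise in auto)
  also have "\<dots> = lin_form n c (chi S') + (1/dt) * (\<Sum>i\<in>{1..n}. chi S i * D i * p i)"
    unfolding lin_form_def by (simp add: sum.distrib sum_distrib_left)
  finally show ?thesis unfolding FS_def set_energy_def c_def D_def p_def by simp
qed

theorem mainTheorem9:
  fixes n :: nat and w :: "nat \<Rightarrow> nat \<Rightarrow> real" and r q dt m :: real and S :: "nat set"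
  assumes w_sym: "\<forall>i\<in>{1..n}. \<forall>j\<in>{1..n}. w i j = w j i"
    and w_nonneg: "\<forall>i\<in>{1..n}. \<forall>j\<in>{1..n}. w i j \<ge> 0"
    and w_diag: "\<forall>i\<in>{1..n}. w i i = 0"
    and deg_pos: "\<forall>i\<in>{1..n}. deg n w i > 0"
    and r: "0 \<le> r" "r \<le> 1"
    and q: "1/2 \<le> q" "q \<le> 1"
    and conn: "connected_graph n w"
    and S: "S \<subseteq> {1..n}" "S \<noteq> {}" "S \<noteq> {1..n}"
    and dt: "dt > 0" and m: "m > 0"
  shows "(\<exists>u\<in>box n m. \<forall>v\<in>box n m. Fu n w r q dt S u \<le> Fu n w r q dt S v)
       \<and> (\<forall>u\<in>box n m. (\<forall>v\<in>box n m. Fu n w r q dt S u \<le> Fu n w r q dt S v) \<longrightarrow>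
            (\<forall>s. - m < s \<and> s < m \<longrightarrow>
               (\<forall>S'. S' \<subseteq> {1..n} \<longrightarrow>
                  FS n w r q dt {i\<in>{1..n}. u i > s} S \<le> FS n w r q dt S' S)))"
proof -
  define c where "c = sd_coeff n w r q dt S"
  have box: "box n m = interval_box n (-m) m" unfolding box_def interval_box_def by simp
  have Fu_le: "Fu n w r q dt S u \<le> Fu n w r q dt S v
      \<longleftrightarrow> shifted_energy n w q c (-m) u \<le> shifted_energy n w q c (-m) v" for u v
    unfolding Fu_eq_shifted_energy[where m = m] c_def by simp
  have FS_le: "FS n w r q dt A S \<le> FS n w r q dt B S
      \<longleftrightarrow> set_energy n w q c A \<le> set_energy n w q c B" for A B
    unfolding FS_eq_set_energy c_def by simp
  have "- m < m" using m by simp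
  note coarea = shifted_energy_coarea_minimization[OF this, of n w q c]
  show ?thesis
  proof (intro conjI ballI impI allI)
    show "\<exists>u\<in>box n m. \<forall>v\<in>box n m. Fu n w r q dt S u \<le> Fu n w r q dt S v"
      using coarea unfolding box Fu_le by (elim conjE)
  next
    fix u s S'
    assume "u \<in> box n m" "\<forall>v\<in>box n m. Fu n w r q dt S u \<le> Fu n w r q dt S v"
      and "- m < s \<and> s < m" and "S' \<subseteq> {1..n}"
    then show "FS n w r q dt {i\<in>{1..n}. u i > s} S \<le> FS n w r q dt S' S"
      using coarea unfolding box Fu_le FS_le by blast
  qed
qed

end
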